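(* Let $f$ be a positive definite function and $W=\{w_1,\dots,w_N\}\subset V$. Then the GBF interpolation operator satisfies $$\sup_{x\in\mathcal{L}(G),\ \|x\|\le1}\|\mathrm{I}_Wx\|\le\|\mathbf{K}_{f,W}^{-1}\|\,\|\mathbf{K}_f\|\le\frac{\max_{1\le k\le n}\hat{f}_k}{\min_{1\le k\le n}\hat{f}_k}.$$
   Context: Let $G$ be a graph with vertex set $V=\{v_1,\dots,v_n\}$, symmetric non-negative weighted adjacency matrix $\mathbf{A}$, degree matrix $\mathbf{D}=\mathrm{diag}(\sum_k\mathbf{A}_{ik})$ (positive), and normalized Laplacian $\mathbf{L}=\mathbf{I}_n-\mathbf{D}^{-1/2}\mathbf{A}\mathbf{D}^{-1/2}$. Signals are vectors in $\mathcal{L}(G)\cong\mathbb{R}^n$ with euclidean norm $\|\cdot\|$ and standard basis $e_1,\dots,e_n$; matrix norms are spectral norms. Fix an orthonormal eigendecomposition $\mathbf{L}=\mathbf{U}\,\mathrm{diag}(\lambda_1,\dots,\lambda_n)\mathbf{U}^\intercal$ with columns $u_1,\dots,u_n$. Fourier transform $\hat{x}=\mathbf{U}^\intercal x$; convolution operator $\mathbf{C}_x=\mathbf{U}\,\mathrm{diag}(\hat{x})\mathbf{U}^\intercal$. For $f\in\mathcal{L}(G)$ let $(\mathbf{K}_f)_{ij}=(\mathbf{C}_{e_j}f)(v_i)$; $f$ is a positive definite function if $\mathbf{K}_f$ is symmetric strictly positive definite. For distinct nodes $w_k=v_{j_k}$, $k=1,\dots,N$, let $\mathbf{K}_{f,W}\in\mathbb{R}^{N\times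 N}$, $(\mathbf{K}_{f,W})_{kl}=(\mathbf{C}_{e_{j_l}}f)(w_k)$; the GBF interpolant is $\mathrm{I}_Wx=\sum_{k=1}^Nc_k\mathbf{C}_{e_{j_k}}f$ where $\mathbf{K}_{f,W}c=(x(w_1),\dots,x(w_N))^\intercal$. *)

theory Defs
  imports "HOL-Analysis.Analysis"
begin

text \<open>Vertices v_1..v_n are the elements of a finite type 'n; signals are real^'n.\<close>

definition diag_mat :: "real^'n \<Rightarrow> real^'n^'n" where
  "diag_mat d = (\<chi> i j. if i = j then d $ i else 0)"

definition degree_mat :: "real^'n^'n \<Rightarrow> real^'n^'n" where
  "degree_mat A = diag_mat (\<chi> i. \<Sum>k\<in>UNIV. A $ i $ k)"

definition norm_laplacian :: "real^'n^'n \<Rightarrow> real^'n^'n" where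
  "norm_laplacian A =
     mat 1 - diag_mat (\<chi> i. 1 / sqrt (\<Sum>k\<in>UNIV. A $ i $ k)) ** A
             ** diag_mat (\<chi> i. 1 / sqrt (\<Sum>k\<in>UNIV. A $ i $ k))"

definition gft :: "real^'n^'n \<Rightarrow> real^'n \<Rightarrow> real^'n" where
  "gft U x = transpose U *v x"

definition conv_op :: "real^'n^'n \<Rightarrow> real^'n \<Rightarrow> real^'n^'n" where
  "conv_op U x = U ** diag_mat (gft U x) ** transpose U"

definition kernel_mat :: "real^'n^'n \<Rightarrow> real^'n \<Rightarrow> real^'n^'n" where
  "kernel_mat U f = (\<chi> i j. (conv_op U (axis j 1) *v f) $ i)"

definition pos_def_function :: "real^'n^'n \<Rightarrow> real^'n \<Rightarrow> bool" where
  "pos_def_function U f \<longleftrightarrow>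
     transpose (kernel_mat U f) = kernel_mat U f \<and>
     (\<forall>x. x \<noteq> 0 \<longrightarrow> x \<bullet> (kernel_mat U f *v x) > 0)"

text \<open>Nodes w_k = v_{j k}, indexed by a finite type 'm (k = 1..N), j injective.\<close>
definition kernel_mat_W :: "real^'n^'n \<Rightarrow> real^'n \<Rightarrow> ('m::finite \<Rightarrow> 'n) \<Rightarrow> real^'m^'m" where
  "kernel_mat_W U f j = (\<chi> k l. (conv_op U (axis (j l) 1) *v f) $ (j k))"

definition gbf_interp ::
  "real^'n^'n \<Rightarrow> real^'n \<Rightarrow> ('m::finite \<Rightarrow> 'n) \<Rightarrow> real^'n \<Rightarrow> real^'n" where
  "gbf_interp U f j x =
     (let c = matrix_inv (kernel_mat_W U f j) *v (\<chi> k. x $ j k)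
      in \<Sum>k\<in>UNIV. c $ k *\<^sub>R (conv_op U (axis (j k) 1) *v f))"

definition spec_norm :: "real^'n^'m \<Rightarrow> real" where
  "spec_norm M = onorm (\<lambda>x. M *v x)"

end

theory Submission
  imports Defs
begin

text \<open>
  Convolution is commutative, so K_f = C_f = U diag(fhat) U^T. Its quadratic form
  sum_k fhat_k (xhat_k)^2 shows that all fhat_k are positive and that ||K_f|| <= max fhat.
  Since K_{f,W} is the principal submatrix of K_f on W, its quadratic form is that of K_f
  on zero-extended coefficient vectors, hence at least min fhat ||c||^2, which gives
  ||K_{f,W}^-1|| <= 1 / min fhat. Finally I_W = K_f E K_{f,W}^-1 S, where the zero
  extension E is an isometry and the sampling S on W is a contraction.
\<close>

lemma diag_mat_mult_vector: "diag_mat a *v x = (\<chi> i. a $ i * x $ i)"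
  by (simp add: diag_mat_def matrix_vector_mult_def vec_eq_iff
      if_distrib[where f="\<lambda>t. t * _"] cong: if_cong)

lemma diag_mat_mult_vector_commute: "diag_mat a *v x = diag_mat x *v a"
  by (simp add: diag_mat_mult_vector mult.commute)

lemma power2_norm_vec: "(norm (x :: real^'n))\<^sup>2 = (\<Sum>k\<in>UNIV. (x $ k)\<^sup>2)"
  by (simp only: power2_norm_eq_inner) (simp add: inner_vec_def power2_eq_square)

lemma norm_diag_mat_mult_vector_le:
  assumes bound: "\<And>k. \<bar>a $ k\<bar> \<le> M"
  shows "norm (diag_mat a *v x) \<le> M * norm x"
proof (rule power2_le_imp_le)
  have M_nonneg: "0 \<le> M" using bound[of undefined] by linarith
  then show "0 \<le> M * norm x" by simp
  have "(norm (diag_mat a *v x))\<^sup>2 = (\<Sum>k\<in>UNIV. (a $ k)\<^sup>2 * (x $ k)\<^sup>2)"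
    by (simp add: power2_norm_vec diag_mat_mult_vector power_mult_distrib)
  also have "\<dots> \<le> (\<Sum>k\<in>UNIV. M\<^sup>2 * (x $ k)\<^sup>2)"
    using bound by (intro sum_mono mult_right_mono) (auto simp: abs_le_square_iff[symmetric] M_nonneg)
  also have "\<dots> = (M * norm x)\<^sup>2"
    by (simp add: power2_norm_vec power_mult_distrib sum_distrib_left)
  finally show "(norm (diag_mat a *v x))\<^sup>2 \<le> (M * norm x)\<^sup>2" .
qed

lemma norm_orthogonal_matrix_vector:
  fixes U :: "real^'n^'n"
  assumes "orthogonal_matrix U"
  shows "norm (U *v x) = norm x"
  using assms orthogonal_transformation_matrix[of "(*v) U"]
  by (simp add: orthogonal_transformation_norm)

lemma norm_gft:
  assumes "orthogonal_matrix U"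
  shows "norm (gft U x) = norm x"
  using assms norm_orthogonal_matrix_vector[of "transpose U"] by (simp only: gft_def) simp

lemma norm_le_spec_norm: "norm (M *v x) \<le> spec_norm M * norm x"
  unfolding spec_norm_def by (rule onorm) simp

lemma spec_norm_nonneg: "0 \<le> spec_norm M"
  unfolding spec_norm_def by (rule onorm_pos_le) simp

lemma spec_norm_le:
  assumes "\<And>x. norm (M *v x) \<le> b * norm x"
  shows "spec_norm M \<le> b"
  unfolding spec_norm_def using assms by (rule onorm_le)

lemma conv_op_mult_vector_commute: "conv_op U x *v y = conv_op U y *v x"
  unfolding conv_op_def gft_def
  by (simp only: matrix_vector_mul_assoc[symmetric] diag_mat_mult_vector_commute)

lemma kernel_mat_eq_conv_op: "kernel_mat U f = conv_op U f"
  by (simp add: kernel_mat_def vec_eq_iff conv_op_mult_vector_commute[of U "axis _ 1" f]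
      matrix_vector_mult_basis column_def)

lemma inner_spectral_mult_vector:
  "x \<bullet> ((U ** diag_mat a ** transpose U) *v x) = (\<Sum>k\<in>UNIV. a $ k * (gft U x $ k)\<^sup>2)"
proof -
  have "x \<bullet> ((U ** diag_mat a ** transpose U) *v x) = (x v* U) \<bullet> (diag_mat a *v gft U x)"
    unfolding gft_def by (simp only: matrix_vector_mul_assoc[symmetric] dot_lmul_matrix)
  also have "\<dots> = (\<Sum>k\<in>UNIV. a $ k * (gft U x $ k)\<^sup>2)"
    by (simp add: gft_def diag_mat_mult_vector inner_vec_def power2_eq_square mult_ac)
  finally show ?thesis .
qed

lemma inner_kernel_mat: "x \<bullet> (kernel_mat U f *v x) = (\<Sum>k\<in>UNIV. gft U f $ k * (gft U x $ k)\<^sup>2)"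
  by (simp only: kernel_mat_eq_conv_op conv_op_def inner_spectral_mult_vector)

lemma gft_pos_if_pos_def_function:
  assumes orth: "orthogonal_matrix U" and pd: "pos_def_function U f"
  shows "gft U f $ k > 0"
proof -
  let ?x = "U *v axis k 1"
  have gft_x: "gft U ?x = axis k 1"
    using orth unfolding gft_def orthogonal_matrix_def
    by (simp only: matrix_vector_mul_assoc matrix_vector_mul_lid)
  then have "?x \<noteq> 0" by (auto simp: gft_def axis_eq_0_iff)
  with pd have "?x \<bullet> (kernel_mat U f *v ?x) > 0" unfolding pos_def_function_def by blast
  also have "?x \<bullet> (kernel_mat U f *v ?x) = gft U f $ k"
    unfolding inner_kernel_mat gft_x
    by (simp add: axis_def power2_eq_square if_distrib[where f="\<lambda>t. _ * t"] cong: if_cong)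
  finally show ?thesis .
qed

lemma inner_kernel_mat_ge:
  assumes orth: "orthogonal_matrix U" and lower: "\<And>k. mu \<le> gft U f $ k"
  shows "mu * (norm x)\<^sup>2 \<le> x \<bullet> (kernel_mat U f *v x)"
proof -
  have "mu * (norm x)\<^sup>2 = (\<Sum>k\<in>UNIV. mu * (gft U x $ k)\<^sup>2)"
    using norm_gft[OF orth, of x] power2_norm_vec[of "gft U x"] by (simp add: sum_distrib_left)
  also have "\<dots> \<le> (\<Sum>k\<in>UNIV. gft U f $ k * (gft U x $ k)\<^sup>2)"
    by (intro sum_mono mult_right_mono lower) simp
  finally show ?thesis by (simp only: inner_kernel_mat)
qed

lemma spec_norm_kernel_mat_le:
  assumes orth: "orthogonal_matrix U" and upper: "\<And>k. \<bar>gft U f $ k\<bar> \<le> M"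
  shows "spec_norm (kernel_mat U f) \<le> M"
proof (rule spec_norm_le)
  fix x
  have "norm (kernel_mat U f *v x) = norm (U *v (diag_mat (gft U f) *v gft U x))"
    by (simp only: kernel_mat_eq_conv_op conv_op_def gft_def matrix_vector_mul_assoc matrix_mul_assoc)
  also have "\<dots> = norm (diag_mat (gft U f) *v gft U x)"
    using orth by (rule norm_orthogonal_matrix_vector)
  also have "\<dots> \<le> M * norm x"
    using norm_diag_mat_mult_vector_le[OF upper] norm_gft[OF orth] by metis
  finally show "norm (kernel_mat U f *v x) \<le> M * norm x" .
qed

definition zero_extend :: "('m::finite \<Rightarrow> 'n) \<Rightarrow> real^'m \<Rightarrow> real^'n" where
  "zero_extend j c = (\<Sum>k\<in>UNIV. c $ k *\<^sub>R axis (j k) 1)"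

definition sample :: "('m::finite \<Rightarrow> 'n) \<Rightarrow> real^'n \<Rightarrow> real^'m" where
  "sample j x = (\<chi> k. x $ j k)"

lemma matrix_vector_mult_zero_extend:
  "M *v zero_extend j c = (\<Sum>k\<in>UNIV. c $ k *\<^sub>R (M *v axis (j k) 1))"
  by (simp add: zero_extend_def matrix_vector_mult_scaleR
      linear_sum[OF matrix_vector_mul_linear] linear_scale[OF matrix_vector_mul_linear])

lemma inner_zero_extend:
  "zero_extend j c \<bullet> (M *v zero_extend j c) = c \<bullet> ((\<chi> k l. M $ j k $ j l) *v c)"
proof -
  have "zero_extend j c \<bullet> (M *v zero_extend j c)
      = (\<Sum>k\<in>UNIV. c $ k * (\<Sum>l\<in>UNIV. c $ l * (axis (j l) 1 \<bullet> (M *v axis (j k) 1))))"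
    unfolding matrix_vector_mult_zero_extend
    by (simp add: zero_extend_def inner_sum_left inner_sum_right mult_ac)
  also have "\<dots> = (\<Sum>k\<in>UNIV. c $ k * (\<Sum>l\<in>UNIV. c $ l * M $ j l $ j k))"
    by (simp add: matrix_vector_mult_basis column_def inner_commute[of "axis _ _"] inner_axis)
  also have "\<dots> = c \<bullet> ((\<chi> k l. M $ j k $ j l) *v c)"
    unfolding inner_vec_def matrix_vector_mult_def
    by (simp add: sum_distrib_left) (subst sum.swap, simp add: mult_ac)
  finally show ?thesis .
qed

lemma norm_zero_extend:
  assumes "inj j"
  shows "norm (zero_extend j c) = norm c"
proof -
  have "zero_extend j c \<bullet> zero_extend j c
      = (\<Sum>k\<in>UNIV. c $ k * (\<Sum>l\<in>UNIV. c $ l * (axis (j l) 1 \<bullet> axis (j k) (1::real))))"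
    by (simp add: zero_extend_def inner_sum_left inner_sum_right mult_ac)
  also have "\<dots> = (\<Sum>k\<in>UNIV. c $ k * c $ k)"
    using assms by (simp add: inner_axis_axis inj_eq if_distrib[where f="\<lambda>t. _ * t"] cong: if_cong)
  also have "\<dots> = c \<bullet> c" by (simp add: inner_vec_def)
  finally show ?thesis by (simp add: norm_eq_sqrt_inner)
qed

lemma norm_sample_le:
  assumes "inj j"
  shows "norm (sample j x) \<le> norm x"
proof (rule power2_le_imp_le)
  have "(norm (sample j x))\<^sup>2 = (\<Sum>i\<in>range j. (x $ i)\<^sup>2)"
    using sum.reindex[OF assms, of "\<lambda>i. (x $ i)\<^sup>2"] by (simp add: power2_norm_vec sample_def)
  also have "\<dots> \<le> (norm x)\<^sup>2"
    unfolding power2_norm_vec by (rule sum_mono2) auto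
  finally show "(norm (sample j x))\<^sup>2 \<le> (norm x)\<^sup>2" .
qed simp

lemma kernel_mat_W_eq: "kernel_mat_W U f j = (\<chi> k l. kernel_mat U f $ j k $ j l)"
  by (simp add: kernel_mat_W_def kernel_mat_def)

lemma gbf_interp_eq:
  "gbf_interp U f j x
     = kernel_mat U f *v zero_extend j (matrix_inv (kernel_mat_W U f j) *v sample j x)"
  by (simp add: gbf_interp_def matrix_vector_mult_zero_extend sample_def
      kernel_mat_eq_conv_op conv_op_mult_vector_commute[of U "axis _ 1" f])

lemma inner_kernel_mat_W_ge:
  assumes orth: "orthogonal_matrix U" and "inj j" and "\<And>k. mu \<le> gft U f $ k"
  shows "mu * (norm c)\<^sup>2 \<le> c \<bullet> (kernel_mat_W U f j *v c)"
  using inner_kernel_mat_ge[OF assms(1,3), of "zero_extend j c"]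
  by (simp add: kernel_mat_W_eq inner_zero_extend norm_zero_extend[OF \<open>inj j\<close>])

lemma norm_mult_vector_ge_if_coercive:
  fixes M :: "real^'m^'m"
  assumes coercive: "\<And>c. mu * (norm c)\<^sup>2 \<le> c \<bullet> (M *v c)"
  shows "mu * norm c \<le> norm (M *v c)"
proof (cases "c = 0")
  case False
  have "mu * norm c * norm c \<le> norm c * norm (M *v c)"
    using coercive[of c] norm_cauchy_schwarz[of c "M *v c"] by (simp add: power2_eq_square)
  with False show ?thesis by (simp add: mult.commute)
qed simp

lemma matrix_inv_right_if_coercive:
  fixes M :: "real^'m^'m"
  assumes "mu > 0" and coercive: "\<And>c. mu * (norm c)\<^sup>2 \<le> c \<bullet> (M *v c)"
  shows "M *v (matrix_inv M *v y) = y"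
proof -
  have "c = 0" if "M *v c = 0" for c
    using norm_mult_vector_ge_if_coercive[OF coercive, of c] that \<open>mu > 0\<close>
    by (simp add: mult_le_0_iff)
  then obtain B where "B ** M = mat 1"
    using matrix_left_invertible_ker by blast
  then have "\<exists>B. M ** B = mat 1 \<and> B ** M = mat 1"
    using matrix_left_right_inverse by blast
  then have "M ** matrix_inv M = mat 1"
    unfolding matrix_inv_def by (rule someI_ex[THEN conjunct1])
  then show ?thesis by (simp add: matrix_vector_mul_assoc)
qed

lemma spec_norm_matrix_inv_le_if_coercive:
  fixes M :: "real^'m^'m"
  assumes "mu > 0" and coercive: "\<And>c. mu * (norm c)\<^sup>2 \<le> c \<bullet> (M *v c)"
  shows "spec_norm (matrix_inv M) \<le> 1 / mu"
proof (rule spec_norm_le)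
  fix y
  have "mu * norm (matrix_inv M *v y) \<le> norm y"
    using norm_mult_vector_ge_if_coercive[OF coercive, of "matrix_inv M *v y"]
    by (simp add: matrix_inv_right_if_coercive[OF assms])
  with \<open>mu > 0\<close> show "norm (matrix_inv M *v y) \<le> 1 / mu * norm y"
    by (simp add: field_simps)
qed

lemma norm_gbf_interp_le:
  assumes "inj j"
  shows "norm (gbf_interp U f j x)
           \<le> spec_norm (matrix_inv (kernel_mat_W U f j)) * spec_norm (kernel_mat U f) * norm x"
proof -
  let ?K = "kernel_mat U f" and ?Kinv = "matrix_inv (kernel_mat_W U f j)"
  have "norm (gbf_interp U f j x) \<le> spec_norm ?K * norm (zero_extend j (?Kinv *v sample j x))"
    unfolding gbf_interp_eq by (rule norm_le_spec_norm)
  also have "\<dots> = spec_norm ?K * norm (?Kinv *v sample j x)"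
    by (simp add: norm_zero_extend[OF assms])
  also have "\<dots> \<le> spec_norm ?K * (spec_norm ?Kinv * norm (sample j x))"
    by (intro mult_left_mono norm_le_spec_norm spec_norm_nonneg)
  also have "\<dots> \<le> spec_norm ?K * (spec_norm ?Kinv * norm x)"
    by (intro mult_left_mono norm_sample_le assms spec_norm_nonneg mult_nonneg_nonneg)
  finally show ?thesis by (simp only: mult_ac)
qed

lemma Sup_norm_gbf_interp_le:
  assumes "inj j"
  shows "Sup {norm (gbf_interp U f j x) | x. norm x \<le> 1}
           \<le> spec_norm (matrix_inv (kernel_mat_W U f j)) * spec_norm (kernel_mat U f)"
    (is "_ \<le> ?bound")
proof (rule cSup_least)
  show "{norm (gbf_interp U f j x) | x. norm x \<le> 1} \<noteq> {}" by (auto intro: exI[of _ 0])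
next
  fix t assume "t \<in> {norm (gbf_interp U f j x) | x. norm x \<le> 1}"
  then obtain x where "norm x \<le> 1" and t: "t = norm (gbf_interp U f j x)" by blast
  have "t \<le> ?bound * norm x"
    unfolding t using assms by (rule norm_gbf_interp_le)
  also have "\<dots> \<le> ?bound"
    using \<open>norm x \<le> 1\<close> by (intro mult_left_le mult_nonneg_nonneg spec_norm_nonneg)
  finally show "t \<le> ?bound" .
qed

theorem theorem8:
  fixes A U :: "real^'n^'n" and lam f :: "real^'n" and j :: "'m::finite \<Rightarrow> 'n"
  assumes sym: "transpose A = A"
    and nonneg: "\<forall>i k. A $ i $ k \<ge> 0"
    and deg_pos: "\<forall>i. (\<Sum>k\<in>UNIV. A $ i $ k) > 0"
    and orth: "orthogonal_matrix U"
    and eig: "norm_laplacian A = U ** diag_mat lam ** transpose U"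
    and pd: "pos_def_function U f"
    and inj: "inj j"
  shows "Sup {norm (gbf_interp U f j x) | x. norm x \<le> 1}
           \<le> spec_norm (matrix_inv (kernel_mat_W U f j)) * spec_norm (kernel_mat U f)
       \<and> spec_norm (matrix_inv (kernel_mat_W U f j)) * spec_norm (kernel_mat U f)
           \<le> Max (range (\<lambda>k. gft U f $ k)) / Min (range (\<lambda>k. gft U f $ k))"
proof -
  define fhat where "fhat = range (\<lambda>k. gft U f $ k)"
  let ?bound = "spec_norm (matrix_inv (kernel_mat_W U f j)) * spec_norm (kernel_mat U f)"
  have fhat_pos: "gft U f $ k > 0" for k
    using orth pd by (rule gft_pos_if_pos_def_function)
  have Min_le: "Min fhat \<le> gft U f $ k" and le_Max: "gft U f $ k \<le> Max fhat" for k
    unfolding fhat_def by (auto intro: Min_le Max_ge)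
  have Min_pos: "Min fhat > 0"
    unfolding fhat_def using fhat_pos by (subst Min_gr_iff) auto
  have "spec_norm (matrix_inv (kernel_mat_W U f j)) \<le> 1 / Min fhat"
    using Min_pos by (intro spec_norm_matrix_inv_le_if_coercive inner_kernel_mat_W_ge orth inj Min_le)
  moreover have "spec_norm (kernel_mat U f) \<le> Max fhat"
    using fhat_pos le_Max by (intro spec_norm_kernel_mat_le orth) (simp add: less_imp_le)
  ultimately have "?bound \<le> 1 / Min fhat * Max fhat"
    by (intro mult_mono spec_norm_nonneg) (use Min_pos in auto)
  moreover have "Sup {norm (gbf_interp U f j x) | x. norm x \<le> 1} \<le> ?bound"
    using inj by (rule Sup_norm_gbf_interp_le)
  ultimately show ?thesis unfolding fhat_def by simp
qed

end
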